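(* Let $(G_n)_{n\in\mathbb N}$ be a sequence of groups all of the same cardinality $\kappa$. Then $|\mathcal A(G_n)|=\kappa^{\aleph_0}$. Consequently the isomorphism classes of archipelago groups do not form a set. In particular, for ordinals $\alpha\ge 0$, if $F_\alpha$ denotes the free group on $\beth_{\alpha+1}$ generators, then the groups $\mathcal A(F_\alpha)$ are pairwise non-isomorphic.
   Context: For a sequence of groups $(G_n)_{n\in\mathbb N}$, an infinite word is a map $w:L\to\bigsqcup_n (G_n\setminus\{1\})$ from a countable linearly ordered set $L$ such that $w^{-1}(G_n)$ is finite for every $n$. Two infinite words are equivalent if for every $m$ their restrictions to the letters from $G_1,\dots,G_m$ represent the same element of $G_1*\cdots*G_m$. The topologist's product $\circledast_n G_n$ is the group of equivalence classes, with multiplication induced by concatenation and inversion by reversing the order and inverting each letter. The free product $*_n G_n$ is the subgroup of classes of finite words. The archipelago group is $\mathcal A(G_n):=\circledast_n G_n/\langle\langle *_n G_n\rangle\rangle$; $\mathcal A(G)$ denotes the case $G_n=G$ for all $n$. $\beth_0=\aleph_0$, $\beth_{\alpha+1}=2^{\beth_\alpha}$. *)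

theory Defs
  imports "HOL-Algebra.Algebra" "HOL-Library.Equipollence" "HOL-Library.FuncSet"
begin

text \<open>A countable linearly ordered index set is represented (up to order isomorphism,
  which is no loss since every countable linear order embeds into the rationals)
  by a subset of the rationals with their usual order.\<close>

type_synonym 'a iword = "rat set \<times> (rat \<Rightarrow> nat \<times> 'a)"

definition letters :: "(nat \<Rightarrow> 'a monoid) \<Rightarrow> (nat \<times> 'a) set" where
  "letters G = {(n, g). g \<in> carrier (G n) \<and> g \<noteq> \<one>\<^bsub>G n\<^esub>}"

definition inf_words :: "(nat \<Rightarrow> 'a monoid) \<Rightarrow> 'a iword set" where
  "inf_words G = {(L, w). w ` L \<subseteq> letters G \<and> (\<forall>n. finite {i \<in> L. fst (w i) = n})}"

definition restr :: "'a iword \<Rightarrow> nat \<Rightarrow> (nat \<times> 'a) list" where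
  "restr u m = map (snd u) (sorted_list_of_set {i \<in> fst u. fst (snd u i) \<le> m})"

text \<open>Left multiplication of a reduced word by a letter (van der Waerden normal form).\<close>
fun fp_insert :: "(nat \<Rightarrow> 'a monoid) \<Rightarrow> nat \<times> 'a \<Rightarrow> (nat \<times> 'a) list \<Rightarrow> (nat \<times> 'a) list" where
  "fp_insert G (n, g) [] = (if g = \<one>\<^bsub>G n\<^esub> then [] else [(n, g)])"
| "fp_insert G (n, g) ((k, h) # xs) =
     (if n = k then (if g \<otimes>\<^bsub>G n\<^esub> h = \<one>\<^bsub>G n\<^esub> then xs else (n, g \<otimes>\<^bsub>G n\<^esub> h) # xs)
      else if g = \<one>\<^bsub>G n\<^esub> then (k, h) # xs else (n, g) # (k, h) # xs)"

text \<open>The reduced form of a finite word; two finite words represent the same element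
  of the free product iff their reduced forms agree.\<close>
definition fp_reduce :: "(nat \<Rightarrow> 'a monoid) \<Rightarrow> (nat \<times> 'a) list \<Rightarrow> (nat \<times> 'a) list" where
  "fp_reduce G xs = foldr (fp_insert G) xs []"

definition word_equiv :: "(nat \<Rightarrow> 'a monoid) \<Rightarrow> 'a iword \<Rightarrow> 'a iword \<Rightarrow> bool" where
  "word_equiv G u v \<longleftrightarrow> (\<forall>m. fp_reduce G (restr u m) = fp_reduce G (restr v m))"

definition tp_class :: "(nat \<Rightarrow> 'a monoid) \<Rightarrow> 'a iword \<Rightarrow> 'a iword set" where
  "tp_class G u = {v \<in> inf_words G. word_equiv G u v}"

text \<open>Order embeddings of the rationals onto parts of the negative / positive rationals.\<close>
definition emb_left :: "rat \<Rightarrow> rat" where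
  "emb_left x = (if x \<le> 0 then x - 1 else - 1 / (1 + x))"

definition emb_right :: "rat \<Rightarrow> rat" where
  "emb_right x = - emb_left (- x)"

definition w_concat :: "'a iword \<Rightarrow> 'a iword \<Rightarrow> 'a iword" where
  "w_concat u v =
     (emb_left ` fst u \<union> emb_right ` fst v,
      \<lambda>q. if q < 0 then snd u (the_inv emb_left q) else snd v (the_inv emb_right q))"

definition w_inv :: "(nat \<Rightarrow> 'a monoid) \<Rightarrow> 'a iword \<Rightarrow> 'a iword" where
  "w_inv G u = (uminus ` fst u,
     \<lambda>q. (fst (snd u (- q)), inv\<^bsub>G (fst (snd u (- q)))\<^esub> snd (snd u (- q))))"

definition topologists_product :: "(nat \<Rightarrow> 'a monoid) \<Rightarrow> 'a iword set monoid" where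
  "topologists_product G =
     \<lparr>carrier = tp_class G ` inf_words G,
      Group.monoid.mult = (\<lambda>P Q. tp_class G (w_concat (SOME u. u \<in> P) (SOME v. v \<in> Q))),
      one = tp_class G ({}, (\<lambda>_. undefined))\<rparr>"

text \<open>The free product as the subgroup of classes of finite words.\<close>
definition free_product_sub :: "(nat \<Rightarrow> 'a monoid) \<Rightarrow> 'a iword set set" where
  "free_product_sub G = tp_class G ` {u \<in> inf_words G. finite (fst u)}"

definition normal_closure :: "('b, 'c) monoid_scheme \<Rightarrow> 'b set \<Rightarrow> 'b set" where
  "normal_closure H S =
     generate H {g \<otimes>\<^bsub>H\<^esub> s \<otimes>\<^bsub>H\<^esub> inv\<^bsub>H\<^esub> g | g s. g \<in> carrier H \<and> s \<in> S}"

definition archipelago :: "(nat \<Rightarrow> 'a monoid) \<Rightarrow> 'a iword set set monoid" where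
  "archipelago G = topologists_product G Mod normal_closure (topologists_product G) (free_product_sub G)"

fun fg_insert :: "'x \<times> bool \<Rightarrow> ('x \<times> bool) list \<Rightarrow> ('x \<times> bool) list" where
  "fg_insert (x, b) [] = [(x, b)]"
| "fg_insert (x, b) ((y, c) # ys) = (if x = y \<and> b \<noteq> c then ys else (x, b) # (y, c) # ys)"

definition fg_reduce :: "('x \<times> bool) list \<Rightarrow> ('x \<times> bool) list" where
  "fg_reduce xs = foldr fg_insert xs []"

text \<open>The free group on the set X: reduced words in the letters x^{+1}, x^{-1} (x in X).\<close>
definition free_group :: "'x set \<Rightarrow> ('x \<times> bool) list monoid" where
  "free_group S = \<lparr>carrier = {ws. (\<forall>p \<in> set ws. fst p \<in> S) \<and> fg_reduce ws = ws},
                   Group.monoid.mult = (\<lambda>u v. fg_reduce (u @ v)), one = Nil\<rparr>"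

definition wo_less :: "'o rel \<Rightarrow> 'o \<Rightarrow> 'o \<Rightarrow> bool" where
  "wo_less r b a \<longleftrightarrow> (b, a) \<in> r \<and> b \<noteq> a"

definition wo_min :: "'o rel \<Rightarrow> 'o \<Rightarrow> bool" where
  "wo_min r a \<longleftrightarrow> a \<in> Field r \<and> (\<forall>b \<in> Field r. (a, b) \<in> r)"

definition wo_succ :: "'o rel \<Rightarrow> 'o \<Rightarrow> 'o \<Rightarrow> bool" where
  "wo_succ r b a \<longleftrightarrow> wo_less r b a \<and> \<not> (\<exists>c. wo_less r b c \<and> wo_less r c a)"

definition wo_limit :: "'o rel \<Rightarrow> 'o \<Rightarrow> bool" where
  "wo_limit r a \<longleftrightarrow> a \<in> Field r \<and> \<not> wo_min r a \<and> \<not> (\<exists>b. wo_succ r b a)"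

text \<open>B a has cardinality beth_alpha, where alpha is the order type of the initial
  segment of r below a: beth_0 = aleph_0, beth_(alpha+1) = 2^beth_alpha, and
  beth_lambda = sup of the earlier beths at limits.\<close>
definition beth_seq :: "'o rel \<Rightarrow> ('o \<Rightarrow> 'c set) \<Rightarrow> bool" where
  "beth_seq r B \<longleftrightarrow>
     (\<forall>a. wo_min r a \<longrightarrow> B a \<approx> (UNIV :: nat set)) \<and>
     (\<forall>a b. wo_succ r b a \<longrightarrow> B a \<approx> Pow (B b)) \<and>
     (\<forall>a. wo_limit r a \<longrightarrow>
         (\<forall>b. wo_less r b a \<longrightarrow> B b \<lesssim> B a) \<and>
         (\<forall>C :: 'c set. (\<forall>b. wo_less r b a \<longrightarrow> B b \<lesssim> C) \<longrightarrow> B a \<lesssim> C))"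

end

theory Submission
  imports Defs "HOL-Library.Countable"
begin

text \<open>
  Upper bound: an element of the topologist's product is represented by a word indexed by a
  countable subset of the rationals, so recording, for every rational, whether it is a position
  of the word, the factor of its letter and the letter transported to G 0 injects the
  topologist's product (hence its quotient) into sequences in G 0.

  Lower bound: for each factor N, reducing the projection onto G 0 * ... * G m and then
  deleting the letters from factors below N is multiplicative. An element lies in the normal
  closure of the free product only if these tails vanish for all large N, since finite words
  only involve finitely many factors. Hence two elements of the topologist's product in the same
  coset have equal tails for all large N. Coding a sequence f in G 0 into the word whose
  letter from G n is the image of f i, where n is a code of (i, N), the tail at factor n
  recovers f i, so distinct sequences give distinct cosets.

  With all factors of size \<kappa> this yields \<kappa>^aleph_0 elements. Taking the factors to be
  the symmetric-difference group on the power set of a type gives an archipelago group larger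
  than every group whose carrier lies in that type. For the free group on a set of size
  beth(\<alpha>+1) the count is again beth(\<alpha>+1), and these are distinct by Cantor's theorem.
\<close>

locale group_sequence =
  fixes G :: "nat \<Rightarrow> 'a monoid"
  assumes group_G: "group (G n)"

section \<open>Normal forms in finite free products\<close>

definition word_over :: "(nat \<Rightarrow> 'a monoid) \<Rightarrow> (nat \<times> 'a) list \<Rightarrow> bool" where
  "word_over G xs \<longleftrightarrow> (\<forall>p\<in>set xs. snd p \<in> carrier (G (fst p)))"

fun reduced_word :: "(nat \<Rightarrow> 'a monoid) \<Rightarrow> (nat \<times> 'a) list \<Rightarrow> bool" where
  "reduced_word G [] = True"
| "reduced_word G [(n, g)] = (g \<in> carrier (G n) \<and> g \<noteq> \<one>\<^bsub>G n\<^esub>)"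
| "reduced_word G ((n, g) # (k, h) # xs) =
     (g \<in> carrier (G n) \<and> g \<noteq> \<one>\<^bsub>G n\<^esub> \<and> n \<noteq> k \<and> reduced_word G ((k, h) # xs))"

lemma word_over_simps [simp]:
  "word_over G []"
  "word_over G ((n, g) # xs) \<longleftrightarrow> g \<in> carrier (G n) \<and> word_over G xs"
  "word_over G (xs @ ys) \<longleftrightarrow> word_over G xs \<and> word_over G ys"
  by (auto simp: word_over_def)

lemma word_over_filter: "word_over G xs \<Longrightarrow> word_over G (filter P xs)"
  by (auto simp: word_over_def)

lemma reduced_word_tl: "reduced_word G (x # xs) \<Longrightarrow> reduced_word G xs"
  by (cases x; cases xs) auto

lemma reduced_word_imp_word_over: "reduced_word G xs \<Longrightarrow> word_over G xs"
  by (induction G xs rule: reduced_word.induct) auto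

lemma reduced_word_Cons:
  "reduced_word G ((n, g) # xs) \<longleftrightarrow>
     g \<in> carrier (G n) \<and> g \<noteq> \<one>\<^bsub>G n\<^esub> \<and> (xs = [] \<or> fst (hd xs) \<noteq> n) \<and> reduced_word G xs"
  by (cases xs) auto

lemma fp_reduce_Nil [simp]: "fp_reduce G [] = []"
  by (simp add: fp_reduce_def)

lemma fp_reduce_Cons [simp]: "fp_reduce G (x # xs) = fp_insert G x (fp_reduce G xs)"
  by (simp add: fp_reduce_def)

lemma fp_reduce_append: "fp_reduce G (xs @ ys) = foldr (fp_insert G) xs (fp_reduce G ys)"
  by (simp add: fp_reduce_def)

context group_sequence
begin

lemma reduced_fp_insert:
  assumes g: "g \<in> carrier (G n)" and ys: "reduced_word G ys"
  shows "reduced_word G (fp_insert G (n, g) ys)"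
proof (cases ys)
  case Nil
  then show ?thesis using g by simp
next
  case (Cons y ys')
  obtain k h where y: "y = (k, h)" by fastforce
  have ys': "reduced_word G ys'" and h: "h \<in> carrier (G k)" "h \<noteq> \<one>\<^bsub>G k\<^esub>"
    and hd: "ys' = [] \<or> fst (hd ys') \<noteq> k"
    using ys Cons y by (auto simp: reduced_word_Cons)
  show ?thesis
  proof (cases "n = k")
    case True
    then have "g \<otimes>\<^bsub>G n\<^esub> h \<in> carrier (G n)"
      using g h group.is_monoid[OF group_G] by (simp add: monoid.m_closed)
    then show ?thesis using Cons y True ys' hd by (simp add: reduced_word_Cons)
  next
    case False
    then show ?thesis using Cons y g h ys ys' hd by (auto simp: reduced_word_Cons)
  qed
qed

lemma fp_insert_one:
  assumes "reduced_word G ys"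
  shows "fp_insert G (n, \<one>\<^bsub>G n\<^esub>) ys = ys"
proof (cases ys)
  case (Cons y ys')
  obtain k h where "y = (k, h)" by fastforce
  with assms Cons show ?thesis by (auto simp: reduced_word_Cons group.is_monoid[OF group_G])
qed simp

lemma fp_insert_mult:
  assumes g: "g \<in> carrier (G n)" and h: "h \<in> carrier (G n)" and ys: "reduced_word G ys"
  shows "fp_insert G (n, g) (fp_insert G (n, h) ys) = fp_insert G (n, g \<otimes>\<^bsub>G n\<^esub> h) ys"
proof (cases ys)
  case Nil
  then show ?thesis using g h group.is_monoid[OF group_G] by auto
next
  case (Cons y ys')
  obtain k c where y: "y = (k, c)" by fastforce
  have c: "c \<in> carrier (G k)" "c \<noteq> \<one>\<^bsub>G k\<^esub>" and hd: "ys' = [] \<or> fst (hd ys') \<noteq> k"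
    using ys Cons y by (auto simp: reduced_word_Cons)
  interpret Gn: group "G n" by (rule group_G)
  show ?thesis
  proof (cases "k = n")
    case True
    then have "c \<in> carrier (G n)" using c by simp
    then have assoc: "g \<otimes>\<^bsub>G n\<^esub> h \<otimes>\<^bsub>G n\<^esub> c = g \<otimes>\<^bsub>G n\<^esub> (h \<otimes>\<^bsub>G n\<^esub> c)"
      using g h by (simp add: Gn.m_assoc)
    show ?thesis
    proof (cases "h \<otimes>\<^bsub>G n\<^esub> c = \<one>\<^bsub>G n\<^esub>")
      case cancel: True
      have "fp_insert G (n, g) ys' = (if g = \<one>\<^bsub>G n\<^esub> then ys' else (n, g) # ys')"
        using hd True by (cases ys') auto
      then show ?thesis using Cons y True cancel assoc g by simp
    next
      case False
      then show ?thesis using Cons y True assoc by simp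
    qed
  next
    case False
    then show ?thesis using Cons y g h by auto
  qed
qed

lemma reduced_foldr_fp_insert:
  "word_over G xs \<Longrightarrow> reduced_word G zs \<Longrightarrow> reduced_word G (foldr (fp_insert G) xs zs)"
proof (induction xs)
  case (Cons x xs)
  obtain n g where "x = (n, g)" by fastforce
  with Cons show ?case by (auto intro: reduced_fp_insert)
qed simp

lemma reduced_fp_reduce: "word_over G xs \<Longrightarrow> reduced_word G (fp_reduce G xs)"
  using reduced_foldr_fp_insert[of xs "[]"] by (simp add: fp_reduce_def)

lemma fp_reduce_reduced: "reduced_word G ys \<Longrightarrow> fp_reduce G ys = ys"
proof (induction ys)
  case (Cons y ys)
  obtain n g where y: "y = (n, g)" by fastforce
  have IH: "fp_reduce G ys = ys" using Cons reduced_word_tl by blast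
  have "g \<noteq> \<one>\<^bsub>G n\<^esub>" "ys = [] \<or> fst (hd ys) \<noteq> n"
    using Cons.prems y by (auto simp: reduced_word_Cons)
  then show ?case using IH y by (cases ys) auto
qed simp

lemma foldr_fp_insert_fp_insert:
  assumes g: "g \<in> carrier (G n)" and ys: "reduced_word G ys" and zs: "reduced_word G zs"
  shows "foldr (fp_insert G) (fp_insert G (n, g) ys) zs = fp_insert G (n, g) (foldr (fp_insert G) ys zs)"
proof (cases ys)
  case Nil
  then show ?thesis using fp_insert_one[OF zs] by auto
next
  case (Cons y ys')
  obtain k h where y: "y = (k, h)" by fastforce
  have h: "h \<in> carrier (G k)"
    using ys Cons y by (auto simp: reduced_word_Cons)
  define R where "R = foldr (fp_insert G) ys' zs"
  have R: "reduced_word G R"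
    unfolding R_def using ys Cons zs
    by (intro reduced_foldr_fp_insert) (auto dest: reduced_word_tl intro: reduced_word_imp_word_over)
  have ys_R: "reduced_word G (foldr (fp_insert G) ys zs)"
    using ys zs by (intro reduced_foldr_fp_insert reduced_word_imp_word_over)
  show ?thesis
  proof (cases "n = k")
    case True
    then show ?thesis
      using Cons y fp_insert_mult[OF g _ R, of h] h fp_insert_one[OF R, of n] R_def by auto
  next
    case False
    then show ?thesis using Cons y fp_insert_one[OF ys_R, of n] by auto
  qed
qed

lemma foldr_fp_reduce:
  "word_over G xs \<Longrightarrow> reduced_word G zs \<Longrightarrow>
     foldr (fp_insert G) (fp_reduce G xs) zs = foldr (fp_insert G) xs zs"
proof (induction xs)
  case (Cons x xs)
  obtain n g where x: "x = (n, g)" by fastforce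
  with Cons.prems have "word_over G xs" "g \<in> carrier (G n)" by auto
  with Cons x show ?case by (simp add: foldr_fp_insert_fp_insert reduced_fp_reduce)
qed simp

lemma fp_reduce_append_reduce:
  "word_over G xs \<Longrightarrow> word_over G ys \<Longrightarrow>
     fp_reduce G (xs @ ys) = fp_reduce G (fp_reduce G xs @ fp_reduce G ys)"
  by (simp add: fp_reduce_append fp_reduce_reduced foldr_fp_reduce reduced_fp_reduce)

lemma fp_reduce_append_reduce_left:
  "word_over G xs \<Longrightarrow> word_over G ys \<Longrightarrow> fp_reduce G (xs @ ys) = fp_reduce G (fp_reduce G xs @ ys)"
  by (metis fp_reduce_append_reduce fp_reduce_reduced reduced_fp_reduce reduced_word_imp_word_over)

lemma fp_reduce_append_reduce_right:
  "word_over G xs \<Longrightarrow> word_over G ys \<Longrightarrow> fp_reduce G (xs @ ys) = fp_reduce G (xs @ fp_reduce G ys)"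
  by (metis fp_reduce_append_reduce fp_reduce_reduced reduced_fp_reduce reduced_word_imp_word_over)

end

definition inv_word :: "(nat \<Rightarrow> 'a monoid) \<Rightarrow> (nat \<times> 'a) list \<Rightarrow> (nat \<times> 'a) list" where
  "inv_word G xs = rev (map (\<lambda>(n, g). (n, inv\<^bsub>G n\<^esub> g)) xs)"

lemma inv_word_Nil [simp]: "inv_word G [] = []"
  by (simp add: inv_word_def)

lemma inv_word_Cons [simp]: "inv_word G ((n, g) # xs) = inv_word G xs @ [(n, inv\<^bsub>G n\<^esub> g)]"
  by (simp add: inv_word_def)

context group_sequence
begin

lemma word_over_inv_word: "word_over G xs \<Longrightarrow> word_over G (inv_word G xs)"
proof (induction xs)
  case (Cons x xs)
  obtain n g where "x = (n, g)" by fastforce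
  with Cons show ?case using group.inv_closed[OF group_G] by auto
qed simp

lemma inv_word_inv_word: "word_over G xs \<Longrightarrow> inv_word G (inv_word G xs) = xs"
proof (induction xs)
  case (Cons x xs)
  obtain n g where "x = (n, g)" by fastforce
  with Cons show ?case using group.inv_inv[OF group_G] by (auto simp: inv_word_def)
qed simp

lemma fp_reduce_filter_fp_insert:
  assumes g: "g \<in> carrier (G n)" and ys: "reduced_word G ys"
  shows "fp_reduce G (filter (\<lambda>l. P (fst l)) (fp_insert G (n, g) ys)) =
     (if P n then fp_insert G (n, g) (fp_reduce G (filter (\<lambda>l. P (fst l)) ys))
      else fp_reduce G (filter (\<lambda>l. P (fst l)) ys))"
proof (cases ys)
  case Nil
  then show ?thesis by simp
next
  case (Cons y ys')
  obtain k h where y: "y = (k, h)" by fastforce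
  have h: "h \<in> carrier (G k)" using ys Cons y by (auto simp: reduced_word_Cons)
  have reduced_filter: "reduced_word G (fp_reduce G (filter (\<lambda>l. P (fst l)) zs))"
    if "reduced_word G zs" for zs
    using that by (intro reduced_fp_reduce word_over_filter reduced_word_imp_word_over)
  define R where "R = fp_reduce G (filter (\<lambda>l. P (fst l)) ys')"
  have R: "reduced_word G R"
    unfolding R_def using ys Cons by (intro reduced_filter) (auto dest: reduced_word_tl)
  show ?thesis
  proof (cases "n = k")
    case True
    then show ?thesis
      using Cons y fp_insert_mult[OF g _ R, of h] h fp_insert_one[OF R, of n] R_def by auto
  next
    case False
    then show ?thesis using Cons y fp_insert_one[OF reduced_filter[OF ys], of n] by auto
  qed
qed

lemma fp_reduce_filter:
  "word_over G xs \<Longrightarrow>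
     fp_reduce G (filter (\<lambda>l. P (fst l)) xs) = fp_reduce G (filter (\<lambda>l. P (fst l)) (fp_reduce G xs))"
proof (induction xs)
  case (Cons x xs)
  obtain n g where x: "x = (n, g)" by fastforce
  with Cons.prems have "word_over G xs" "g \<in> carrier (G n)" by auto
  with Cons x show ?case by (simp add: fp_reduce_filter_fp_insert reduced_fp_reduce)
qed simp

lemma fp_reduce_cancel:
  "word_over G xs \<Longrightarrow> word_over G ys \<Longrightarrow> fp_reduce G (xs @ inv_word G xs @ ys) = fp_reduce G ys"
proof (induction xs arbitrary: ys)
  case (Cons x xs)
  obtain n g where x: "x = (n, g)" by fastforce
  with Cons.prems have xs: "word_over G xs" and g: "g \<in> carrier (G n)" by auto
  have g': "inv\<^bsub>G n\<^esub> g \<in> carrier (G n)" using group.inv_closed[OF group_G g] .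
  have R: "reduced_word G (fp_reduce G ys)" using reduced_fp_reduce[OF Cons.prems(2)] .
  have "fp_reduce G ((x # xs) @ inv_word G (x # xs) @ ys) =
      fp_insert G (n, g) (fp_reduce G (xs @ inv_word G xs @ (n, inv\<^bsub>G n\<^esub> g) # ys))"
    using x by simp
  also have "\<dots> = fp_insert G (n, g) (fp_insert G (n, inv\<^bsub>G n\<^esub> g) (fp_reduce G ys))"
    using Cons.IH[OF xs] Cons.prems(2) g' by simp
  also have "\<dots> = fp_insert G (n, g \<otimes>\<^bsub>G n\<^esub> inv\<^bsub>G n\<^esub> g) (fp_reduce G ys)"
    using fp_insert_mult[OF g g' R] .
  also have "\<dots> = fp_reduce G ys"
    using fp_insert_one[OF R] group.r_inv[OF group_G g] by simp
  finally show ?case .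
qed simp

lemma fp_reduce_inv_cancel:
  "word_over G xs \<Longrightarrow> word_over G ys \<Longrightarrow> fp_reduce G (inv_word G xs @ xs @ ys) = fp_reduce G ys"
  using fp_reduce_cancel[OF word_over_inv_word] inv_word_inv_word by metis

end

lemma sorted_list_of_set_eqI:
  fixes A :: "'b::linorder set"
  assumes "finite A" "sorted_wrt (<) xs" "set xs = A"
  shows "sorted_list_of_set A = xs"
  using assms strict_sorted_equal strict_sorted_list_of_set set_sorted_list_of_set by metis

lemma sorted_list_of_set_image_strict_mono:
  fixes f :: "'b::linorder \<Rightarrow> 'c::linorder"
  assumes "finite A" "strict_mono f"
  shows "sorted_list_of_set (f ` A) = map f (sorted_list_of_set A)"
proof (rule sorted_list_of_set_eqI)
  show "sorted_wrt (<) (map f (sorted_list_of_set A))"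
    unfolding sorted_wrt_map
    by (rule sorted_wrt_mono_rel[OF _ strict_sorted_list_of_set[of A]])
      (use assms in \<open>auto simp: strict_mono_def\<close>)
qed (use assms in auto)

lemma sorted_list_of_set_image_antimono:
  fixes f :: "'b::linorder \<Rightarrow> 'c::linorder"
  assumes "finite A" "\<And>x y. x < y \<Longrightarrow> f y < f x"
  shows "sorted_list_of_set (f ` A) = rev (map f (sorted_list_of_set A))"
proof (rule sorted_list_of_set_eqI)
  show "sorted_wrt (<) (rev (map f (sorted_list_of_set A)))"
    unfolding sorted_wrt_rev sorted_wrt_map
    by (rule sorted_wrt_mono_rel[OF _ strict_sorted_list_of_set[of A]]) (use assms in auto)
qed (use assms in auto)

lemma sorted_list_of_set_Un_less:
  fixes A :: "'b::linorder set"
  assumes "finite A" "finite B" "\<And>a b. a \<in> A \<Longrightarrow> b \<in> B \<Longrightarrow> a < b"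
  shows "sorted_list_of_set (A \<union> B) = sorted_list_of_set A @ sorted_list_of_set B"
proof (rule sorted_list_of_set_eqI)
  show "sorted_wrt (<) (sorted_list_of_set A @ sorted_list_of_set B)"
    using assms strict_sorted_list_of_set[of A] strict_sorted_list_of_set[of B]
    by (auto simp: sorted_wrt_append)
qed (use assms in auto)

lemma filter_sorted_list_of_set:
  "finite A \<Longrightarrow> filter P (sorted_list_of_set A) = sorted_list_of_set {x \<in> A. P x}"
  by (rule sorted_list_of_set_eqI[symmetric]) (auto intro: sorted_wrt_filter)

lemma strict_mono_emb_left: "strict_mono emb_left"
proof (rule strict_monoI)
  fix x y :: rat
  assume "x < y"
  show "emb_left x < emb_left y"
  proof (cases "y \<le> 0")
    case True
    then show ?thesis using \<open>x < y\<close> by (simp add: emb_left_def)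
  next
    case False
    have "- 1 < - 1 / (1 + y)" using False by (simp add: field_simps)
    then have "x \<le> 0 \<Longrightarrow> x - 1 < - 1 / (1 + y)" by linarith
    moreover have "x > 0 \<Longrightarrow> - 1 / (1 + x) < - 1 / (1 + y)" using \<open>x < y\<close> by (simp add: field_simps)
    ultimately show ?thesis using False \<open>x < y\<close> by (auto simp: emb_left_def)
  qed
qed

lemma strict_mono_emb_right: "strict_mono emb_right"
  using strict_mono_emb_left by (auto simp: strict_mono_def emb_right_def)

lemma emb_left_neg [simp]: "emb_left x < 0"
  by (auto simp: emb_left_def field_simps)

lemma emb_right_pos [simp]: "emb_right x > 0"
  using emb_left_neg[of "- x"] by (simp add: emb_right_def)

lemma not_emb_right_neg [simp]: "\<not> emb_right x < 0"
  using emb_right_pos[of x] by linarith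

lemma the_inv_emb_left [simp]: "the_inv emb_left (emb_left x) = x"
  by (rule the_inv_f_f[OF strict_mono_imp_inj_on[OF strict_mono_emb_left]])

lemma the_inv_emb_right [simp]: "the_inv emb_right (emb_right x) = x"
  by (rule the_inv_f_f[OF strict_mono_imp_inj_on[OF strict_mono_emb_right]])

definition restr_positions :: "'a iword \<Rightarrow> nat \<Rightarrow> rat set" where
  "restr_positions u m = {i \<in> fst u. fst (snd u i) \<le> m}"

lemma restr_eq_map: "restr u m = map (snd u) (sorted_list_of_set (restr_positions u m))"
  by (simp add: restr_def restr_positions_def)

lemma finite_restr_positions:
  assumes "u \<in> inf_words G"
  shows "finite (restr_positions u m)"
proof -
  have "restr_positions u m = (\<Union>n\<le>m. {i \<in> fst u. fst (snd u i) = n})"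
    by (auto simp: restr_positions_def)
  then show ?thesis using assms by (auto simp: inf_words_def)
qed

lemma word_over_restr:
  assumes "u \<in> inf_words G"
  shows "word_over G (restr u m)"
proof -
  have "set (restr u m) \<subseteq> letters G"
    using assms finite_restr_positions[OF assms]
    by (auto simp: restr_eq_map restr_positions_def inf_words_def)
  then show ?thesis by (auto simp: word_over_def letters_def)
qed

lemma restr_w_concat:
  assumes "u \<in> inf_words G" "v \<in> inf_words G"
  shows "restr (w_concat u v) m = restr u m @ restr v m"
proof -
  have "restr_positions (w_concat u v) m =
      emb_left ` restr_positions u m \<union> emb_right ` restr_positions v m"
    by (auto simp: restr_positions_def w_concat_def image_iff)
  then have "sorted_list_of_set (restr_positions (w_concat u v) m) =
      map emb_left (sorted_list_of_set (restr_positions u m)) @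
      map emb_right (sorted_list_of_set (restr_positions v m))"
    using finite_restr_positions[OF assms(1)] finite_restr_positions[OF assms(2)]
    by (simp, subst sorted_list_of_set_Un_less)
      (auto simp: sorted_list_of_set_image_strict_mono strict_mono_emb_left strict_mono_emb_right
        intro: less_trans[of _ 0])
  then show ?thesis by (simp add: restr_eq_map w_concat_def comp_def)
qed

lemma restr_w_inv:
  assumes "u \<in> inf_words G"
  shows "restr (w_inv G u) m = inv_word G (restr u m)"
proof -
  have "restr_positions (w_inv G u) m = uminus ` restr_positions u m"
    by (auto simp: restr_positions_def w_inv_def image_iff)
  then have "sorted_list_of_set (restr_positions (w_inv G u) m) =
      rev (map uminus (sorted_list_of_set (restr_positions u m)))"
    using finite_restr_positions[OF assms] by (simp add: sorted_list_of_set_image_antimono)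
  then show ?thesis
    by (simp add: restr_eq_map w_inv_def inv_word_def rev_map comp_def case_prod_beta)
qed

lemma w_concat_inf_words:
  assumes "u \<in> inf_words G" "v \<in> inf_words G"
  shows "w_concat u v \<in> inf_words G"
proof -
  have "{i \<in> fst (w_concat u v). fst (snd (w_concat u v) i) = n} =
      emb_left ` {i \<in> fst u. fst (snd u i) = n} \<union> emb_right ` {i \<in> fst v. fst (snd v i) = n}" for n
    by (auto simp: w_concat_def image_iff)
  then show ?thesis using assms by (auto simp: inf_words_def w_concat_def)
qed

lemma (in group_sequence) w_inv_inf_words:
  assumes u: "u \<in> inf_words G"
  shows "w_inv G u \<in> inf_words G"
proof -
  have "{i \<in> fst (w_inv G u). fst (snd (w_inv G u) i) = n} = uminus ` {i \<in> fst u. fst (snd u i) = n}" for n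
    by (auto simp: w_inv_def image_iff)
  moreover have "snd (w_inv G u) ` fst (w_inv G u) \<subseteq> letters G"
  proof
    fix l
    assume "l \<in> snd (w_inv G u) ` fst (w_inv G u)"
    then obtain i where i: "i \<in> fst u" "l = (fst (snd u i), inv\<^bsub>G (fst (snd u i))\<^esub> snd (snd u i))"
      by (auto simp: w_inv_def)
    have "snd u i \<in> letters G" using u i by (auto simp: inf_words_def)
    then show "l \<in> letters G"
      using i group.inv_closed[OF group_G] group.inv_eq_1_iff[OF group_G] by (auto simp: letters_def)
  qed
  ultimately show ?thesis using u by (auto simp: inf_words_def)
qed

definition class_rep :: "'b set \<Rightarrow> 'b" where
  "class_rep P = (SOME u. u \<in> P)"

definition proj_nf :: "(nat \<Rightarrow> 'a monoid) \<Rightarrow> 'a iword \<Rightarrow> nat \<Rightarrow> (nat \<times> 'a) list" where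
  "proj_nf G u m = fp_reduce G (restr u m)"

definition class_nf :: "(nat \<Rightarrow> 'a monoid) \<Rightarrow> 'a iword set \<Rightarrow> nat \<Rightarrow> (nat \<times> 'a) list" where
  "class_nf G P = proj_nf G (class_rep P)"

lemma word_equiv_iff: "word_equiv G u v \<longleftrightarrow> proj_nf G u = proj_nf G v"
  by (auto simp: word_equiv_def proj_nf_def fun_eq_iff)

lemma mem_tp_class: "v \<in> tp_class G u \<longleftrightarrow> v \<in> inf_words G \<and> proj_nf G u = proj_nf G v"
  by (simp add: tp_class_def word_equiv_iff)

lemma tp_class_eq_iff:
  assumes "u \<in> inf_words G" "v \<in> inf_words G"
  shows "tp_class G u = tp_class G v \<longleftrightarrow> proj_nf G u = proj_nf G v"
proof
  assume "tp_class G u = tp_class G v"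
  then have "v \<in> tp_class G u" using assms(2) by (simp add: mem_tp_class)
  then show "proj_nf G u = proj_nf G v" by (simp add: mem_tp_class)
qed (auto simp: mem_tp_class)

lemma carrier_topologists_product: "carrier (topologists_product G) = tp_class G ` inf_words G"
  by (simp add: topologists_product_def)

lemma class_rep_tp_class:
  assumes "u \<in> inf_words G"
  shows "class_rep (tp_class G u) \<in> inf_words G" "proj_nf G (class_rep (tp_class G u)) = proj_nf G u"
proof -
  have "u \<in> tp_class G u" using assms by (simp add: mem_tp_class)
  then have "class_rep (tp_class G u) \<in> tp_class G u" unfolding class_rep_def by (rule someI)
  then show "class_rep (tp_class G u) \<in> inf_words G" "proj_nf G (class_rep (tp_class G u)) = proj_nf G u"
    by (simp_all add: mem_tp_class)
qed

lemma class_nf_tp_class: "u \<in> inf_words G \<Longrightarrow> class_nf G (tp_class G u) = proj_nf G u"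
  by (simp add: class_nf_def class_rep_tp_class)

lemma class_rep_in_inf_words:
  assumes "P \<in> carrier (topologists_product G)"
  shows "class_rep P \<in> inf_words G"
  using assms class_rep_tp_class(1) by (auto simp: carrier_topologists_product)

lemma topologists_product_eqI:
  assumes "P \<in> carrier (topologists_product G)" "Q \<in> carrier (topologists_product G)"
    and "\<And>m. class_nf G P m = class_nf G Q m"
  shows "P = Q"
proof -
  obtain u v where u: "u \<in> inf_words G" "P = tp_class G u" and v: "v \<in> inf_words G" "Q = tp_class G v"
    using assms(1,2) by (auto simp: carrier_topologists_product)
  with assms(3) have "proj_nf G u = proj_nf G v" by (simp add: class_nf_tp_class fun_eq_iff)
  with u v show ?thesis using tp_class_eq_iff by blast
qed

lemma topologists_product_mult:
  "P \<otimes>\<^bsub>topologists_product G\<^esub> Q = tp_class G (w_concat (class_rep P) (class_rep Q))"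
  by (simp add: topologists_product_def class_rep_def)

lemma topologists_product_one: "\<one>\<^bsub>topologists_product G\<^esub> = tp_class G ({}, \<lambda>_. undefined)"
  by (simp add: topologists_product_def)

lemma empty_word_in_inf_words: "({}, \<lambda>_. undefined) \<in> inf_words G"
  by (simp add: inf_words_def)

context group_sequence
begin

abbreviation TP :: "'a iword set monoid" where
  "TP \<equiv> topologists_product G"

lemma reduced_class_nf: "P \<in> carrier TP \<Longrightarrow> reduced_word G (class_nf G P m)"
  by (simp add: class_nf_def proj_nf_def reduced_fp_reduce word_over_restr class_rep_in_inf_words)

lemma word_over_class_nf: "P \<in> carrier TP \<Longrightarrow> word_over G (class_nf G P m)"
  by (simp add: reduced_class_nf reduced_word_imp_word_over)

lemma topologists_product_mult_closed:
  "P \<in> carrier TP \<Longrightarrow> Q \<in> carrier TP \<Longrightarrow> P \<otimes>\<^bsub>TP\<^esub> Q \<in> carrier TP"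
  by (simp add: topologists_product_mult carrier_topologists_product
      w_concat_inf_words class_rep_in_inf_words)

lemma class_nf_mult:
  assumes "P \<in> carrier TP" "Q \<in> carrier TP"
  shows "class_nf G (P \<otimes>\<^bsub>TP\<^esub> Q) m = fp_reduce G (class_nf G P m @ class_nf G Q m)"
proof -
  have u: "class_rep P \<in> inf_words G" and v: "class_rep Q \<in> inf_words G"
    using assms class_rep_in_inf_words by auto
  have "class_nf G (P \<otimes>\<^bsub>TP\<^esub> Q) m = proj_nf G (w_concat (class_rep P) (class_rep Q)) m"
    by (simp add: topologists_product_mult class_nf_tp_class[OF w_concat_inf_words[OF u v]])
  also have "\<dots> = fp_reduce G (restr (class_rep P) m @ restr (class_rep Q) m)"
    by (simp add: proj_nf_def restr_w_concat[OF u v])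
  also have "\<dots> = fp_reduce G (class_nf G P m @ class_nf G Q m)"
    using u v by (simp add: class_nf_def proj_nf_def fp_reduce_append_reduce word_over_restr)
  finally show ?thesis .
qed

lemma class_nf_one: "class_nf G \<one>\<^bsub>TP\<^esub> m = []"
  by (simp add: topologists_product_one class_nf_tp_class empty_word_in_inf_words proj_nf_def restr_def)

lemma one_in_carrier_topologists_product: "\<one>\<^bsub>TP\<^esub> \<in> carrier TP"
  by (simp add: topologists_product_one carrier_topologists_product empty_word_in_inf_words)

lemma topologists_product_assoc:
  assumes "P \<in> carrier TP" "Q \<in> carrier TP" "S \<in> carrier TP"
  shows "P \<otimes>\<^bsub>TP\<^esub> Q \<otimes>\<^bsub>TP\<^esub> S = P \<otimes>\<^bsub>TP\<^esub> (Q \<otimes>\<^bsub>TP\<^esub> S)"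
proof (rule topologists_product_eqI[where G = G])
  fix m
  let ?a = "class_nf G P m" and ?b = "class_nf G Q m" and ?c = "class_nf G S m"
  have w: "word_over G ?a" "word_over G ?b" "word_over G ?c"
    using assms word_over_class_nf by auto
  have "class_nf G (P \<otimes>\<^bsub>TP\<^esub> Q \<otimes>\<^bsub>TP\<^esub> S) m = fp_reduce G (fp_reduce G (?a @ ?b) @ ?c)"
    using assms by (simp add: class_nf_mult topologists_product_mult_closed)
  also have "\<dots> = fp_reduce G ((?a @ ?b) @ ?c)"
    using fp_reduce_append_reduce_left[of "?a @ ?b" ?c] w by simp
  also have "\<dots> = fp_reduce G (?a @ fp_reduce G (?b @ ?c))"
    using fp_reduce_append_reduce_right[of ?a "?b @ ?c"] w by simp
  also have "\<dots> = class_nf G (P \<otimes>\<^bsub>TP\<^esub> (Q \<otimes>\<^bsub>TP\<^esub> S)) m"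
    using assms by (simp add: class_nf_mult topologists_product_mult_closed)
  finally show "class_nf G (P \<otimes>\<^bsub>TP\<^esub> Q \<otimes>\<^bsub>TP\<^esub> S) m = class_nf G (P \<otimes>\<^bsub>TP\<^esub> (Q \<otimes>\<^bsub>TP\<^esub> S)) m" .
qed (use assms in \<open>simp_all add: topologists_product_mult_closed\<close>)

lemma topologists_product_inv_left:
  assumes P: "P \<in> carrier TP"
  shows "tp_class G (w_inv G (class_rep P)) \<otimes>\<^bsub>TP\<^esub> P = \<one>\<^bsub>TP\<^esub>"
proof -
  let ?u = "class_rep P"
  have u: "?u \<in> inf_words G" using class_rep_in_inf_words[OF P] .
  have Q: "tp_class G (w_inv G ?u) \<in> carrier TP"
    using w_inv_inf_words[OF u] by (simp add: carrier_topologists_product)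
  have "class_nf G (tp_class G (w_inv G ?u) \<otimes>\<^bsub>TP\<^esub> P) m = []" for m
  proof -
    have "class_nf G (tp_class G (w_inv G ?u) \<otimes>\<^bsub>TP\<^esub> P) m =
        fp_reduce G (class_nf G (tp_class G (w_inv G ?u)) m @ class_nf G P m)"
      by (rule class_nf_mult[OF Q P])
    also have "\<dots> = fp_reduce G (fp_reduce G (inv_word G (restr ?u m)) @ fp_reduce G (restr ?u m))"
      unfolding class_nf_tp_class[OF w_inv_inf_words[OF u]]
      by (simp add: proj_nf_def restr_w_inv[OF u] class_nf_def)
    also have "\<dots> = fp_reduce G (inv_word G (restr ?u m) @ restr ?u m @ [])"
      using fp_reduce_append_reduce[OF word_over_inv_word word_over_restr[OF u], OF word_over_restr[OF u]]
      by simp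
    also have "\<dots> = []"
      using fp_reduce_inv_cancel[OF word_over_restr[OF u], where ys = "[]"] by simp
    finally show ?thesis .
  qed
  then show ?thesis
    using Q P one_in_carrier_topologists_product
    by (intro topologists_product_eqI[where G = G]) (simp_all add: topologists_product_mult_closed class_nf_one)
qed

lemma topologists_product_group: "group TP"
proof (rule groupI)
  show "\<one>\<^bsub>TP\<^esub> \<otimes>\<^bsub>TP\<^esub> P = P" if "P \<in> carrier TP" for P
    using that one_in_carrier_topologists_product
    by (intro topologists_product_eqI[where G = G])
      (simp_all add: topologists_product_mult_closed class_nf_mult class_nf_one fp_reduce_reduced
        reduced_class_nf)
  show "\<exists>Q\<in>carrier TP. Q \<otimes>\<^bsub>TP\<^esub> P = \<one>\<^bsub>TP\<^esub>" if "P \<in> carrier TP" for P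
  proof
    show "tp_class G (w_inv G (class_rep P)) \<in> carrier TP"
      using that by (simp add: carrier_topologists_product w_inv_inf_words class_rep_in_inf_words)
  qed (rule topologists_product_inv_left[OF that])
qed (simp_all add: topologists_product_mult_closed one_in_carrier_topologists_product
    topologists_product_assoc)

end

sublocale group_sequence \<subseteq> TP: group "topologists_product G"
  by (rule topologists_product_group)

definition tail_nf :: "(nat \<Rightarrow> 'a monoid) \<Rightarrow> nat \<Rightarrow> 'a iword set \<Rightarrow> nat \<Rightarrow> (nat \<times> 'a) list" where
  "tail_nf G N P m = fp_reduce G (filter (\<lambda>l. N \<le> fst l) (class_nf G P m))"

definition eventually_tailless :: "(nat \<Rightarrow> 'a monoid) \<Rightarrow> 'a iword set set" where
  "eventually_tailless G =
     {P \<in> carrier (topologists_product G). \<forall>\<^sub>F k in sequentially. \<forall>m. tail_nf G k P m = []}"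

context group_sequence
begin

abbreviation free_product_closure :: "'a iword set set" where
  "free_product_closure \<equiv> normal_closure TP (free_product_sub G)"

lemma reduced_tail_nf: "P \<in> carrier TP \<Longrightarrow> reduced_word G (tail_nf G N P m)"
  unfolding tail_nf_def by (intro reduced_fp_reduce word_over_filter word_over_class_nf)

lemma tail_nf_mult:
  assumes P: "P \<in> carrier TP" and Q: "Q \<in> carrier TP"
  shows "tail_nf G N (P \<otimes>\<^bsub>TP\<^esub> Q) m = fp_reduce G (tail_nf G N P m @ tail_nf G N Q m)"
proof -
  let ?a = "class_nf G P m" and ?b = "class_nf G Q m" and ?f = "filter (\<lambda>l. N \<le> fst l)"
  have w: "word_over G ?a" "word_over G ?b" using P Q word_over_class_nf by auto
  have "tail_nf G N (P \<otimes>\<^bsub>TP\<^esub> Q) m = fp_reduce G (?f (fp_reduce G (?a @ ?b)))"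
    by (simp add: tail_nf_def class_nf_mult[OF P Q])
  also have "\<dots> = fp_reduce G (?f ?a @ ?f ?b)"
    using fp_reduce_filter[where xs = "?a @ ?b" and P = "\<lambda>n. N \<le> n"] w by simp
  also have "\<dots> = fp_reduce G (tail_nf G N P m @ tail_nf G N Q m)"
    unfolding tail_nf_def using fp_reduce_append_reduce word_over_filter w by blast
  finally show ?thesis .
qed

lemma tail_nf_one: "tail_nf G N \<one>\<^bsub>TP\<^esub> m = []"
  by (simp add: tail_nf_def class_nf_one)

lemma tail_nf_mult_tailless:
  assumes "P \<in> carrier TP" "Q \<in> carrier TP" "tail_nf G N P m = []"
  shows "tail_nf G N (P \<otimes>\<^bsub>TP\<^esub> Q) m = tail_nf G N Q m"
  using assms by (simp add: tail_nf_mult fp_reduce_reduced reduced_tail_nf)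

lemma tail_nf_inv:
  assumes P: "P \<in> carrier TP" and "tail_nf G N P m = []"
  shows "tail_nf G N (inv\<^bsub>TP\<^esub> P) m = []"
  using tail_nf_mult_tailless[OF P TP.inv_closed[OF P]] assms tail_nf_one by simp

lemma subgroup_eventually_tailless: "subgroup (eventually_tailless G) TP"
proof (rule TP.subgroupI)
  show "eventually_tailless G \<subseteq> carrier TP" "eventually_tailless G \<noteq> {}"
    using tail_nf_one by (auto simp: eventually_tailless_def)
  show "inv\<^bsub>TP\<^esub> P \<in> eventually_tailless G" if "P \<in> eventually_tailless G" for P
    using that by (auto simp: eventually_tailless_def tail_nf_inv elim!: eventually_mono)
  show "P \<otimes>\<^bsub>TP\<^esub> Q \<in> eventually_tailless G"
    if P: "P \<in> eventually_tailless G" and Q: "Q \<in> eventually_tailless G" for P Q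
  proof -
    have "\<forall>\<^sub>F k in sequentially. (\<forall>m. tail_nf G k P m = []) \<and> (\<forall>m. tail_nf G k Q m = [])"
      using P Q by (auto simp: eventually_tailless_def intro: eventually_conj)
    then show ?thesis
      using P Q by (auto simp: eventually_tailless_def tail_nf_mult_tailless elim!: eventually_mono)
  qed
qed

lemma finite_word_eventually_tailless:
  assumes u: "u \<in> inf_words G" and "finite (fst u)"
  shows "tp_class G u \<in> eventually_tailless G"
proof -
  define N0 where "N0 = Suc (Max (insert 0 ((\<lambda>i. fst (snd u i)) ` fst u)))"
  have below: "fst (snd u i) < N0" if "i \<in> fst u" for i
    using assms(2) that by (auto simp: N0_def less_Suc_eq_le)
  have "tail_nf G N (tp_class G u) m = []" if "N0 \<le> N" for N m
  proof -
    have "filter (\<lambda>l. N \<le> fst l) (restr u m) = []"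
      using that finite_restr_positions[OF u]
      by (auto simp: restr_eq_map restr_positions_def filter_empty_conv dest!: below)
    then show ?thesis
      using fp_reduce_filter[OF word_over_restr[OF u], of "\<lambda>n. N \<le> n" m]
      by (simp add: tail_nf_def class_nf_tp_class[OF u] proj_nf_def)
  qed
  then show ?thesis
    using u by (auto simp: eventually_tailless_def carrier_topologists_product intro: eventually_sequentiallyI)
qed

lemma free_product_closure_subset: "free_product_closure \<subseteq> eventually_tailless G"
  unfolding normal_closure_def
proof (rule TP.generate_subgroup_incl[OF _ subgroup_eventually_tailless], clarify)
  fix g s
  assume g: "g \<in> carrier TP" and "s \<in> free_product_sub G"
  then have "s \<in> eventually_tailless G"
    using finite_word_eventually_tailless by (auto simp: free_product_sub_def)
  then have s: "s \<in> carrier TP" and tailless: "\<forall>\<^sub>F k in sequentially. \<forall>m. tail_nf G k s m = []"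
    by (auto simp: eventually_tailless_def)
  have "tail_nf G N (g \<otimes>\<^bsub>TP\<^esub> s \<otimes>\<^bsub>TP\<^esub> inv\<^bsub>TP\<^esub> g) m = []"
    if "\<forall>m. tail_nf G N s m = []" for N m
  proof -
    have "tail_nf G N (g \<otimes>\<^bsub>TP\<^esub> s \<otimes>\<^bsub>TP\<^esub> inv\<^bsub>TP\<^esub> g) m =
        fp_reduce G (fp_reduce G (tail_nf G N g m @ []) @ tail_nf G N (inv\<^bsub>TP\<^esub> g) m)"
      using g s that by (simp add: tail_nf_mult)
    also have "\<dots> = fp_reduce G (tail_nf G N g m @ tail_nf G N (inv\<^bsub>TP\<^esub> g) m)"
      using g by (simp add: fp_reduce_reduced reduced_tail_nf)
    also have "\<dots> = []"
      using tail_nf_mult[OF g TP.inv_closed[OF g], of N m] g by (simp add: tail_nf_one)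
    finally show ?thesis .
  qed
  with tailless g s show "g \<otimes>\<^bsub>TP\<^esub> s \<otimes>\<^bsub>TP\<^esub> inv\<^bsub>TP\<^esub> g \<in> eventually_tailless G"
    by (auto simp: eventually_tailless_def elim!: eventually_mono)
qed

lemma eventually_tail_nf_eq_if_rcoset_eq:
  assumes P: "P \<in> carrier TP" and Q: "Q \<in> carrier TP"
    and eq: "r_coset TP free_product_closure P = r_coset TP free_product_closure Q"
  shows "\<forall>\<^sub>F k in sequentially. \<forall>m. tail_nf G k P m = tail_nf G k Q m"
proof -
  have "\<one>\<^bsub>TP\<^esub> \<in> free_product_closure"
    unfolding normal_closure_def by (rule generate.one)
  then have "Q \<in> r_coset TP free_product_closure Q"
    using TP.l_one[OF Q] unfolding r_coset_def by blast
  then have "Q \<in> r_coset TP free_product_closure P"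
    by (simp only: eq)
  then obtain h where h: "h \<in> free_product_closure" "Q = h \<otimes>\<^bsub>TP\<^esub> P"
    unfolding r_coset_def by blast
  then have "h \<in> eventually_tailless G" using free_product_closure_subset by blast
  with h(2) P show ?thesis
    by (auto simp: eventually_tailless_def tail_nf_mult_tailless elim!: eventually_mono)
qed

end

section \<open>Lower bound for the archipelago group\<close>

definition diagonal_word :: "(nat \<Rightarrow> 'a monoid) \<Rightarrow> (nat \<Rightarrow> 'a \<Rightarrow> 'a) \<Rightarrow> (nat \<Rightarrow> 'a) \<Rightarrow> 'a iword" where
  "diagonal_word G c f =
     ({of_nat n | n. c n (f (fst (prod_decode n))) \<noteq> \<one>\<^bsub>G n\<^esub>},
      \<lambda>q. (nat \<lfloor>q\<rfloor>, c (nat \<lfloor>q\<rfloor>) (f (fst (prod_decode (nat \<lfloor>q\<rfloor>))))))"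

context group_sequence
begin

context
  fixes c :: "nat \<Rightarrow> 'a \<Rightarrow> 'a"
  assumes c_bij: "\<And>n. bij_betw (c n) (carrier (G 0)) (carrier (G n))"
begin

lemma diagonal_word_in_inf_words:
  assumes "f \<in> UNIV \<rightarrow> carrier (G 0)"
  shows "diagonal_word G c f \<in> inf_words G"
proof -
  have "c n (f k) \<in> carrier (G n)" for n k
    using assms c_bij[of n] by (auto simp: bij_betw_def)
  moreover have "{i \<in> fst (diagonal_word G c f). fst (snd (diagonal_word G c f) i) = n} \<subseteq> {of_nat n}" for n
    by (auto simp: diagonal_word_def)
  ultimately show ?thesis
    by (auto simp: inf_words_def diagonal_word_def letters_def intro: finite_subset)
qed

lemma tail_nf_diagonal_word:
  fixes n :: nat
  assumes f: "f \<in> UNIV \<rightarrow> carrier (G 0)"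
  defines "a \<equiv> c n (f (fst (prod_decode n)))"
  shows "tail_nf G n (tp_class G (diagonal_word G c f)) n = (if a \<noteq> \<one>\<^bsub>G n\<^esub> then [(n, a)] else [])"
proof -
  let ?u = "diagonal_word G c f"
  have u: "?u \<in> inf_words G" by (rule diagonal_word_in_inf_words[OF f])
  have a: "a \<in> carrier (G n)" using f c_bij[of n] by (auto simp: a_def bij_betw_def)
  have "{x \<in> restr_positions ?u n. n \<le> fst (snd ?u x)} = (if a \<noteq> \<one>\<^bsub>G n\<^esub> then {of_nat n} else {})"
    by (auto simp: restr_positions_def diagonal_word_def a_def)
  then have "filter (\<lambda>l. n \<le> fst l) (restr ?u n) = (if a \<noteq> \<one>\<^bsub>G n\<^esub> then [(n, a)] else [])"
    using finite_restr_positions[OF u]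
    by (simp add: restr_eq_map filter_map comp_def filter_sorted_list_of_set)
      (simp add: diagonal_word_def a_def)
  then show ?thesis
    using a fp_reduce_filter[OF word_over_restr[OF u], of "\<lambda>k. n \<le> k" n]
    by (cases "a = \<one>\<^bsub>G n\<^esub>") (simp_all add: tail_nf_def class_nf_tp_class[OF u] proj_nf_def)
qed

lemma inj_on_diagonal_coset:
  "inj_on (\<lambda>f. r_coset TP free_product_closure (tp_class G (diagonal_word G c f))) (UNIV \<rightarrow>\<^sub>E carrier (G 0))"
proof (rule inj_onI)
  fix f g :: "nat \<Rightarrow> 'a"
  assume "f \<in> UNIV \<rightarrow>\<^sub>E carrier (G 0)" "g \<in> UNIV \<rightarrow>\<^sub>E carrier (G 0)"
  then have f: "f \<in> UNIV \<rightarrow> carrier (G 0)" and g: "g \<in> UNIV \<rightarrow> carrier (G 0)" by auto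
  assume "r_coset TP free_product_closure (tp_class G (diagonal_word G c f)) =
    r_coset TP free_product_closure (tp_class G (diagonal_word G c g))"
  then obtain N0 where N0: "\<And>N m. N0 \<le> N \<Longrightarrow>
      tail_nf G N (tp_class G (diagonal_word G c f)) m = tail_nf G N (tp_class G (diagonal_word G c g)) m"
    using eventually_tail_nf_eq_if_rcoset_eq[of "tp_class G (diagonal_word G c f)" "tp_class G (diagonal_word G c g)"]
      diagonal_word_in_inf_words[OF f] diagonal_word_in_inf_words[OF g]
    unfolding carrier_topologists_product eventually_sequentially by blast
  have "f i = g i" for i
  proof -
    define n where "n = prod_encode (i, N0)"
    have n: "N0 \<le> n" "fst (prod_decode n) = i" by (auto simp: n_def le_prod_encode_2)
    then have "c n (f i) = c n (g i)"
      using N0[of n n] by (auto simp: tail_nf_diagonal_word[OF f] tail_nf_diagonal_word[OF g] split: if_splits)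
    with f g c_bij[of n] show ?thesis by (auto simp: bij_betw_def inj_on_def)
  qed
  then show "f = g" by blast
qed

lemma lepoll_carrier_archipelago: "(UNIV :: nat set) \<rightarrow>\<^sub>E carrier (G 0) \<lesssim> carrier (archipelago G)"
  unfolding lepoll_def
proof (intro exI conjI)
  show "(\<lambda>f. r_coset TP free_product_closure (tp_class G (diagonal_word G c f))) ` (UNIV \<rightarrow>\<^sub>E carrier (G 0))
      \<subseteq> carrier (archipelago G)"
    using diagonal_word_in_inf_words
    by (auto simp: archipelago_def FactGroup_def RCOSETS_def carrier_topologists_product)
qed (rule inj_on_diagonal_coset)

end

end

section \<open>Upper bound for the archipelago group\<close>

definition position_code :: "(nat \<Rightarrow> 'a \<Rightarrow> 'a) \<Rightarrow> 'a iword \<Rightarrow> nat \<Rightarrow> (nat \<times> 'a) option" where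
  "position_code d u i =
     (if from_nat i \<in> fst u
      then Some (fst (snd u (from_nat i)), d (fst (snd u (from_nat i))) (snd (snd u (from_nat i))))
      else None)"

text \<open>Coordinate (i, 0) holds the letter, (i, 1) whether i is a position and (i, t + 2)
  whether the letter lies in factor t; a and b play the roles of False and True.\<close>

definition sequence_code :: "'a \<Rightarrow> 'a \<Rightarrow> (nat \<Rightarrow> (nat \<times> 'a) option) \<Rightarrow> nat \<Rightarrow> 'a" where
  "sequence_code a b s k =
     (case prod_decode k of
        (i, 0) \<Rightarrow> (case s i of Some (n, x) \<Rightarrow> x | None \<Rightarrow> a)
      | (i, Suc 0) \<Rightarrow> (if s i \<noteq> None then b else a)
      | (i, Suc (Suc t)) \<Rightarrow> (if \<exists>x. s i = Some (t, x) then b else a))"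

lemma sequence_code_inj:
  assumes "a \<noteq> b" "sequence_code a b s = sequence_code a b s'"
  shows "s = s'"
proof
  fix i
  have e: "sequence_code a b s (prod_encode (i, j)) = sequence_code a b s' (prod_encode (i, j))" for j
    using assms by simp
  have none: "s i = None \<longleftrightarrow> s' i = None"
    using e[of 1] assms(1) by (cases "s i"; cases "s' i") (auto simp: sequence_code_def)
  show "s i = s' i"
  proof (cases "s i")
    case (Some p)
    obtain n x where p: "p = (n, x)" by fastforce
    obtain n' x' where s': "s' i = Some (n', x')" using none Some by fastforce
    have "\<exists>x. s' i = Some (n, x)"
      using e[of "Suc (Suc n)"] Some p assms(1) by (auto simp: sequence_code_def split: if_splits)
    moreover have "x = x'" using e[of 0] Some p s' by (simp add: sequence_code_def)
    ultimately show ?thesis using Some p s' by simp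
  qed (use none in simp)
qed

lemma sequence_code_in_PiE:
  assumes "a \<in> A" "b \<in> A" "\<And>i n x. s i = Some (n, x) \<Longrightarrow> x \<in> A"
  shows "sequence_code a b s \<in> (UNIV :: nat set) \<rightarrow>\<^sub>E A"
proof -
  have "sequence_code a b s k \<in> A" for k
    using assms by (auto simp: sequence_code_def split: prod.splits nat.splits option.splits)
  then show ?thesis by auto
qed

context group_sequence
begin

context
  fixes d :: "nat \<Rightarrow> 'a \<Rightarrow> 'a"
  assumes d_bij: "\<And>n. bij_betw (d n) (carrier (G n)) (carrier (G 0))"
begin

lemma position_code_inj:
  assumes P: "P \<in> carrier TP" and Q: "Q \<in> carrier TP"
    and eq: "position_code d (class_rep P) = position_code d (class_rep Q)"
  shows "P = Q"
proof (rule topologists_product_eqI[OF P Q])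
  let ?u = "class_rep P" and ?v = "class_rep Q"
  have u: "?u \<in> inf_words G" and v: "?v \<in> inf_words G"
    using P Q class_rep_in_inf_words by auto
  have e: "position_code d ?u (to_nat q) = position_code d ?v (to_nat q)" for q
    using eq by simp
  have positions: "q \<in> fst ?u \<longleftrightarrow> q \<in> fst ?v" for q
    using e[of q] by (auto simp: position_code_def split: if_splits)
  have letters: "snd ?u q = snd ?v q" if "q \<in> fst ?u" for q
  proof -
    have qv: "q \<in> fst ?v" using positions that by simp
    have "snd ?u q \<in> letters G" "snd ?v q \<in> letters G"
      using u v that qv by (auto simp: inf_words_def)
    moreover have "fst (snd ?u q) = fst (snd ?v q)"
      "d (fst (snd ?u q)) (snd (snd ?u q)) = d (fst (snd ?v q)) (snd (snd ?v q))"
      using e[of q] that qv by (auto simp: position_code_def)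
    ultimately show ?thesis
      using d_bij[of "fst (snd ?u q)"] by (auto simp: letters_def bij_betw_def inj_on_def prod_eq_iff)
  qed
  have "restr_positions ?u m = restr_positions ?v m" for m
    using positions letters by (auto simp: restr_positions_def)
  moreover have "x \<in> fst ?u" if "x \<in> set (sorted_list_of_set (restr_positions ?u m))" for x m
    using that finite_restr_positions[OF u, of m] by (auto simp: restr_positions_def)
  ultimately have "restr ?u m = restr ?v m" for m
    unfolding restr_eq_map using letters by (auto intro: map_cong)
  then show "class_nf G P m = class_nf G Q m" for m
    by (simp add: class_nf_def proj_nf_def)
qed

lemma trivial_factors_if_trivial_G0:
  assumes "carrier (G 0) \<subseteq> {\<one>\<^bsub>G 0\<^esub>}"
  shows "carrier (G n) \<subseteq> {\<one>\<^bsub>G n\<^esub>}"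
proof
  fix g
  assume g: "g \<in> carrier (G n)"
  have one: "\<one>\<^bsub>G n\<^esub> \<in> carrier (G n)" using group.is_monoid[OF group_G] by (rule monoid.one_closed)
  have "d n g \<in> carrier (G 0)" "d n \<one>\<^bsub>G n\<^esub> \<in> carrier (G 0)"
    using bij_betw_apply[OF d_bij] g one by auto
  then have "d n g = d n \<one>\<^bsub>G n\<^esub>"
    using singletonD[OF subsetD[OF assms]] by metis
  then show "g \<in> {\<one>\<^bsub>G n\<^esub>}"
    using inj_onD[OF bij_betw_imp_inj_on[OF d_bij[of n]]] g one by blast
qed

lemma topologists_product_trivial_if_trivial_G0:
  assumes "carrier (G 0) \<subseteq> {\<one>\<^bsub>G 0\<^esub>}"
  shows "carrier TP \<subseteq> {\<one>\<^bsub>TP\<^esub>}"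
proof
  fix P
  assume P: "P \<in> carrier TP"
  have "class_rep P \<in> inf_words G" using class_rep_in_inf_words[OF P] .
  then have "fst (class_rep P) = {}"
    using trivial_factors_if_trivial_G0[OF assms] by (fastforce simp: inf_words_def letters_def)
  then have "class_nf G P m = []" for m
    by (simp add: class_nf_def proj_nf_def restr_def)
  then have "class_nf G P m = class_nf G \<one>\<^bsub>TP\<^esub> m" for m
    by (simp add: class_nf_one)
  then show "P \<in> {\<one>\<^bsub>TP\<^esub>}" using topologists_product_eqI[OF P TP.one_closed] by simp
qed

lemma position_code_in_G0:
  assumes P: "P \<in> carrier TP" and "position_code d (class_rep P) i = Some (n, x)"
  shows "x \<in> carrier (G 0)"
proof -
  have i: "from_nat i \<in> fst (class_rep P)" and n: "n = fst (snd (class_rep P) (from_nat i))"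
    and x: "x = d n (snd (snd (class_rep P) (from_nat i)))"
    using assms(2) by (auto simp: position_code_def split: if_splits)
  have "snd (class_rep P) (from_nat i) \<in> letters G"
    using class_rep_in_inf_words[OF P] i by (auto simp: inf_words_def)
  then have "snd (snd (class_rep P) (from_nat i)) \<in> carrier (G n)"
    using n by (auto simp: letters_def)
  then show "x \<in> carrier (G 0)" unfolding x by (rule bij_betw_apply[OF d_bij])
qed

lemma carrier_topologists_product_lepoll: "carrier TP \<lesssim> (UNIV :: nat set) \<rightarrow>\<^sub>E carrier (G 0)"
proof (cases "carrier (G 0) \<subseteq> {\<one>\<^bsub>G 0\<^esub>}")
  case False
  then obtain b where b: "b \<in> carrier (G 0)" "b \<noteq> \<one>\<^bsub>G 0\<^esub>" by blast
  have one: "\<one>\<^bsub>G 0\<^esub> \<in> carrier (G 0)" using group.is_monoid[OF group_G] by (rule monoid.one_closed)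
  let ?F = "\<lambda>P. sequence_code \<one>\<^bsub>G 0\<^esub> b (position_code d (class_rep P))"
  have "inj_on ?F (carrier TP)"
  proof (rule inj_onI)
    fix P Q
    assume "P \<in> carrier TP" "Q \<in> carrier TP" "?F P = ?F Q"
    then show "P = Q" using position_code_inj sequence_code_inj[OF b(2)[symmetric]] by blast
  qed
  moreover have "?F P \<in> UNIV \<rightarrow>\<^sub>E carrier (G 0)" if "P \<in> carrier TP" for P
    using that by (intro sequence_code_in_PiE[OF one b(1)] position_code_in_G0)
  ultimately show ?thesis unfolding lepoll_def by blast
next
  case True
  have one: "(\<lambda>_. \<one>\<^bsub>G 0\<^esub>) \<in> (UNIV :: nat set) \<rightarrow>\<^sub>E carrier (G 0)"
    using group.is_monoid[OF group_G] monoid.one_closed by auto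
  have "carrier TP \<lesssim> {\<one>\<^bsub>TP\<^esub>}"
    using topologists_product_trivial_if_trivial_G0[OF True] by (rule subset_imp_lepoll)
  also have "\<dots> \<lesssim> insert (\<lambda>_. \<one>\<^bsub>G 0\<^esub>) ((UNIV :: nat set) \<rightarrow>\<^sub>E carrier (G 0))"
    by (rule singleton_lepoll)
  also have "\<dots> = (UNIV :: nat set) \<rightarrow>\<^sub>E carrier (G 0)"
    using one by (rule insert_absorb)
  finally show ?thesis .
qed

lemma carrier_archipelago_lepoll: "carrier (archipelago G) \<lesssim> (UNIV :: nat set) \<rightarrow>\<^sub>E carrier (G 0)"
proof -
  have "carrier (archipelago G) \<subseteq> (\<lambda>x. r_coset TP free_product_closure x) ` carrier TP"
    by (auto simp: archipelago_def FactGroup_def RCOSETS_def)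
  then have "carrier (archipelago G) \<lesssim> carrier TP"
    by (rule subset_image_lepoll)
  then show ?thesis
    using carrier_topologists_product_lepoll by (rule lepoll_trans)
qed

end

end

section \<open>Free groups\<close>

fun fg_reduced :: "('x \<times> bool) list \<Rightarrow> bool" where
  "fg_reduced [] = True"
| "fg_reduced [a] = True"
| "fg_reduced ((x, b) # (y, c) # ys) = (\<not> (x = y \<and> b \<noteq> c) \<and> fg_reduced ((y, c) # ys))"

lemma fg_reduced_tl: "fg_reduced (a # xs) \<Longrightarrow> fg_reduced xs"
  by (cases a; cases xs) auto

lemma fg_reduce_Nil [simp]: "fg_reduce [] = []"
  by (simp add: fg_reduce_def)

lemma fg_reduce_Cons [simp]: "fg_reduce (a # xs) = fg_insert a (fg_reduce xs)"
  by (simp add: fg_reduce_def)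

lemma fg_reduce_append: "fg_reduce (xs @ ys) = foldr fg_insert xs (fg_reduce ys)"
  by (simp add: fg_reduce_def)

lemma fg_reduced_fg_insert: "fg_reduced ys \<Longrightarrow> fg_reduced (fg_insert a ys)"
proof (cases ys)
  case (Cons y ys')
  assume "fg_reduced ys"
  moreover obtain x b z c where "a = (x, b)" "y = (z, c)" by fastforce
  ultimately show ?thesis using Cons fg_reduced_tl by (cases ys') auto
qed (cases a, simp)

lemma fg_insert_cancel: "fg_reduced ys \<Longrightarrow> fg_insert (x, \<not> b) (fg_insert (x, b) ys) = ys"
proof (cases ys)
  case (Cons y ys')
  assume reduced: "fg_reduced ys"
  obtain z c where y: "y = (z, c)" by fastforce
  show ?thesis
  proof (cases "x = z \<and> b \<noteq> c")
    case True
    have "fg_insert (x, \<not> b) ys' = (x, \<not> b) # ys'"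
    proof (cases ys')
      case (Cons w ws)
      obtain z' c' where "w = (z', c')" by fastforce
      then show ?thesis using reduced Cons y \<open>ys = y # ys'\<close> True by auto
    qed simp
    then show ?thesis using Cons y True by auto
  qed (use Cons y in auto)
qed simp

lemma fg_reduced_fg_reduce: "fg_reduced (fg_reduce xs)"
  by (induction xs) (auto intro: fg_reduced_fg_insert)

lemma fg_reduce_reduced: "fg_reduced ys \<Longrightarrow> fg_reduce ys = ys"
proof (induction ys)
  case (Cons y ys)
  have IH: "fg_reduce ys = ys" using Cons fg_reduced_tl by blast
  obtain x b where y: "y = (x, b)" by fastforce
  show ?case
  proof (cases ys)
    case (Cons z zs)
    obtain x' b' where "z = (x', b')" by fastforce
    then show ?thesis using IH Cons.prems y Cons by auto
  qed (simp add: y)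
qed simp

lemma foldr_fg_insert_fg_insert:
  assumes ys: "fg_reduced ys" and zs: "fg_reduced zs"
  shows "foldr fg_insert (fg_insert a ys) zs = fg_insert a (foldr fg_insert ys zs)"
proof (cases ys)
  case (Cons y ys')
  obtain x b where a: "a = (x, b)" by fastforce
  obtain z c where y: "y = (z, c)" by fastforce
  have "fg_reduced (foldr fg_insert ys' zs)"
    by (induction ys') (use zs in \<open>auto intro: fg_reduced_fg_insert\<close>)
  then show ?thesis
    using Cons a y fg_insert_cancel[of "foldr fg_insert ys' zs" z c] by auto
qed (cases a, simp)

lemma foldr_fg_reduce: "fg_reduced zs \<Longrightarrow> foldr fg_insert (fg_reduce xs) zs = foldr fg_insert xs zs"
  by (induction xs) (simp_all add: foldr_fg_insert_fg_insert fg_reduced_fg_reduce)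

lemma fg_reduce_append_reduce_left: "fg_reduce (fg_reduce xs @ ys) = fg_reduce (xs @ ys)"
  by (simp add: fg_reduce_append foldr_fg_reduce fg_reduced_fg_reduce)

lemma fg_reduce_append_reduce_right: "fg_reduce (xs @ fg_reduce ys) = fg_reduce (xs @ ys)"
  by (simp add: fg_reduce_append fg_reduce_reduced fg_reduced_fg_reduce)

definition fg_inv :: "('x \<times> bool) list \<Rightarrow> ('x \<times> bool) list" where
  "fg_inv xs = rev (map (\<lambda>(x, b). (x, \<not> b)) xs)"

lemma fg_reduce_inv_cancel: "fg_reduce (fg_inv xs @ xs @ ys) = fg_reduce ys"
proof (induction xs arbitrary: ys)
  case (Cons a xs)
  obtain x b where a: "a = (x, b)" by fastforce
  have "fg_reduce (fg_inv (a # xs) @ (a # xs) @ ys) =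
      foldr fg_insert (fg_inv xs) (fg_insert (x, \<not> b) (fg_insert (x, b) (fg_reduce (xs @ ys))))"
    by (simp add: fg_inv_def a fg_reduce_append)
  also have "\<dots> = foldr fg_insert (fg_inv xs) (fg_reduce (xs @ ys))"
    by (subst fg_insert_cancel[OF fg_reduced_fg_reduce]) (rule refl)
  also have "\<dots> = fg_reduce (fg_inv xs @ xs @ ys)"
    by (simp add: fg_reduce_append)
  finally show ?case using Cons.IH by simp
qed (simp add: fg_inv_def)

lemma set_fg_reduce: "set (fg_reduce xs) \<subseteq> set xs"
proof (induction xs)
  case (Cons a xs)
  have "set (fg_insert a ys) \<subseteq> insert a (set ys)" for ys
    by (cases a; cases ys) (auto split: if_splits)
  with Cons show ?case by fastforce
qed simp

lemma group_free_group: "group (free_group S)"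
proof (rule groupI)
  let ?F = "free_group S"
  have carrier_iff: "u \<in> carrier ?F \<longleftrightarrow> (\<forall>p\<in>set u. fst p \<in> S) \<and> fg_reduce u = u" for u
    by (simp add: free_group_def)
  have mult: "u \<otimes>\<^bsub>?F\<^esub> v = fg_reduce (u @ v)" for u v
    by (simp add: free_group_def)
  have one: "\<one>\<^bsub>?F\<^esub> = []"
    by (simp add: free_group_def)
  have reduce_in_carrier: "fg_reduce w \<in> carrier ?F" if "\<forall>p\<in>set w. fst p \<in> S" for w
    using that set_fg_reduce[of w] by (auto simp: carrier_iff fg_reduce_reduced fg_reduced_fg_reduce)
  show "u \<otimes>\<^bsub>?F\<^esub> v \<in> carrier ?F" if "u \<in> carrier ?F" "v \<in> carrier ?F" for u v
    unfolding mult using that by (intro reduce_in_carrier) (auto simp: carrier_iff)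
  show "\<one>\<^bsub>?F\<^esub> \<in> carrier ?F"
    by (simp add: one carrier_iff)
  show "u \<otimes>\<^bsub>?F\<^esub> v \<otimes>\<^bsub>?F\<^esub> w = u \<otimes>\<^bsub>?F\<^esub> (v \<otimes>\<^bsub>?F\<^esub> w)" for u v w
    by (simp add: mult fg_reduce_append_reduce_left fg_reduce_append_reduce_right)
  show "\<one>\<^bsub>?F\<^esub> \<otimes>\<^bsub>?F\<^esub> u = u" if "u \<in> carrier ?F" for u
    using that by (simp add: mult one carrier_iff)
  show "\<exists>v\<in>carrier ?F. v \<otimes>\<^bsub>?F\<^esub> u = \<one>\<^bsub>?F\<^esub>" if "u \<in> carrier ?F" for u
  proof
    show "fg_reduce (fg_inv u) \<in> carrier ?F"
      using that by (intro reduce_in_carrier) (auto simp: fg_inv_def carrier_iff)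
    show "fg_reduce (fg_inv u) \<otimes>\<^bsub>?F\<^esub> u = \<one>\<^bsub>?F\<^esub>"
      using fg_reduce_inv_cancel[of u "[]"] by (simp add: mult one fg_reduce_append_reduce_left)
  qed
qed

lemma Pow_lepoll_mono: "A \<lesssim> B \<Longrightarrow> Pow A \<lesssim> Pow B"
proof -
  assume "A \<lesssim> B"
  then obtain f where f: "inj_on f A" "f ` A \<subseteq> B" by (auto simp: lepoll_def)
  then have "inj_on (image f) (Pow A)" "image f ` Pow A \<subseteq> Pow B"
    using inj_on_image_Pow by blast+
  then show ?thesis unfolding lepoll_def by blast
qed

lemma nat_times_lepoll: "(UNIV :: nat set) \<lesssim> D \<Longrightarrow> (UNIV :: nat set) \<times> D \<lesssim> D"
proof -
  assume D: "(UNIV :: nat set) \<lesssim> D"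
  then have "D \<times> D \<approx> D"
    using card_of_Times_same_infinite eqpoll_iff_card_of_ordIso infinite_le_lepoll by blast
  moreover have "(UNIV :: nat set) \<times> D \<lesssim> D \<times> D"
    using D lepoll_refl by (rule times_lepoll_mono)
  ultimately show ?thesis using eqpoll_imp_lepoll lepoll_trans by blast
qed

text \<open>A sequence of words over Pow D is coded by a subset of nat * nat * nat * D: with a fixed
  dummy element d, the quadruples (i, j, 0, d) and (i, j, 1, d) record that the j-th letter of
  the i-th word exists and is positive; the quadruples (i, j, 2, x) list its elements x.\<close>

definition free_group_sequence_code ::
    "'c \<Rightarrow> (nat \<Rightarrow> ('c set \<times> bool) list) \<Rightarrow> (nat \<times> nat \<times> nat \<times> 'c) set" where
  "free_group_sequence_code d F =
     {(i, j, 0, d) | i j. j < length (F i)} \<union> {(i, j, 1, d) | i j. j < length (F i) \<and> snd (F i ! j)}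
     \<union> {(i, j, 2, x) | i j x. j < length (F i) \<and> x \<in> fst (F i ! j)}"

lemma free_group_sequence_code_inj:
  assumes code: "free_group_sequence_code d F = free_group_sequence_code d F'"
  shows "F = F'"
proof
  fix i
  have "(i, j, 0, d) \<in> free_group_sequence_code d F \<longleftrightarrow> j < length (F i)"
    "(i, j, 0, d) \<in> free_group_sequence_code d F' \<longleftrightarrow> j < length (F' i)" for j
    by (auto simp: free_group_sequence_code_def)
  then have "j < length (F i) \<longleftrightarrow> j < length (F' i)" for j
    using code by simp
  then have length: "length (F i) = length (F' i)" by (meson linorder_neqE_nat less_irrefl)
  show "F i = F' i"
  proof (rule nth_equalityI[OF length])
    fix j
    assume "j < length (F i)"
    then have "(i, j, 1, d) \<in> free_group_sequence_code d F \<longleftrightarrow> snd (F i ! j)"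
      "(i, j, 1, d) \<in> free_group_sequence_code d F' \<longleftrightarrow> snd (F' i ! j)"
      "(i, j, 2, x) \<in> free_group_sequence_code d F \<longleftrightarrow> x \<in> fst (F i ! j)"
      "(i, j, 2, x) \<in> free_group_sequence_code d F' \<longleftrightarrow> x \<in> fst (F' i ! j)" for x
      using length by (auto simp: free_group_sequence_code_def)
    then have "snd (F i ! j) = snd (F' i ! j)" "fst (F i ! j) = fst (F' i ! j)"
      using code by blast+
    then show "F i ! j = F' i ! j" by (simp add: prod_eq_iff)
  qed
qed

lemma free_group_sequences_lepoll_Pow:
  assumes D: "(UNIV :: nat set) \<lesssim> D"
  shows "(UNIV :: nat set) \<rightarrow>\<^sub>E carrier (free_group (Pow D)) \<lesssim> Pow D"
proof -
  let ?X = "(UNIV :: nat set) \<rightarrow>\<^sub>E carrier (free_group (Pow D))"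
  let ?N = "UNIV :: nat set"
  obtain d where d: "d \<in> D" using D by (auto simp: lepoll_def)
  have "free_group_sequence_code d F \<subseteq> ?N \<times> ?N \<times> ?N \<times> D" if "F \<in> ?X" for F
  proof -
    have "fst (F i ! j) \<subseteq> D" if "j < length (F i)" for i j
      using \<open>F \<in> ?X\<close> that nth_mem by (fastforce simp: free_group_def)
    then show ?thesis using d by (auto simp: free_group_sequence_code_def)
  qed
  then have "?X \<lesssim> Pow (?N \<times> ?N \<times> ?N \<times> D)"
    unfolding lepoll_def
  proof (intro exI conjI)
    show "inj_on (free_group_sequence_code d) ?X"
      by (rule inj_onI) (rule free_group_sequence_code_inj)
  qed auto
  also have "\<dots> \<lesssim> Pow D"
  proof (rule Pow_lepoll_mono)
    have "?N \<times> D \<lesssim> D" using D by (rule nat_times_lepoll)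
    then have "?N \<times> ?N \<times> D \<lesssim> D"
      using times_lepoll_mono[OF lepoll_refl] nat_times_lepoll[OF D] lepoll_trans by blast
    then show "?N \<times> ?N \<times> ?N \<times> D \<lesssim> D"
      using times_lepoll_mono[OF lepoll_refl] nat_times_lepoll[OF D] lepoll_trans by blast
  qed
  finally show ?thesis .
qed

lemma Pow_lepoll_free_group_sequences: "Pow D \<lesssim> (UNIV :: nat set) \<rightarrow>\<^sub>E carrier (free_group (Pow D))"
  unfolding lepoll_def
  by (intro exI[of _ "\<lambda>S (_ :: nat). [(S, True)]"]) (auto simp: inj_on_def fun_eq_iff free_group_def)

section \<open>Well-orders and beth numbers\<close>

context
  fixes r :: "'o rel"
  assumes WO: "Well_order r"
begin

interpretation W: wo_rel r
  using WO by (simp add: wo_rel_def)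

lemma wo_succ_between:
  assumes "wo_less r a b"
  obtains a' where "wo_succ r a a'" "(a', b) \<in> r"
proof -
  define S where "S = {c \<in> Field r. wo_less r a c}"
  have S: "S \<subseteq> Field r" "b \<in> S"
    using assms by (auto simp: S_def wo_less_def Field_def)
  have "wo_succ r a (W.minim S)"
  proof -
    have "wo_less r a (W.minim S)" using W.minim_in[OF S(1)] S(2) by (auto simp: S_def)
    moreover have "\<not> (wo_less r a x \<and> wo_less r x (W.minim S))" for x
    proof
      assume x: "wo_less r a x \<and> wo_less r x (W.minim S)"
      then have "x \<in> S" by (auto simp: S_def wo_less_def Field_def)
      then have "(W.minim S, x) \<in> r" using W.minim_least[OF S(1)] by blast
      then show False using x antisymD[OF W.ANTISYM] by (auto simp: wo_less_def)
    qed
    ultimately show ?thesis by (auto simp: wo_succ_def)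
  qed
  then show ?thesis using that W.minim_least[OF S] by blast
qed

lemma wo_less_pred_if_succ:
  assumes succ: "wo_succ r c b" and ab: "wo_less r a b" and "a \<noteq> c"
  shows "wo_less r a c"
proof (rule ccontr)
  assume "\<not> wo_less r a c"
  moreover have "a \<in> Field r" "c \<in> Field r"
    using succ ab by (auto simp: wo_succ_def wo_less_def Field_def)
  ultimately have "wo_less r c a" using W.TOTALS \<open>a \<noteq> c\<close> by (auto simp: wo_less_def)
  then show False using succ ab by (auto simp: wo_succ_def)
qed

lemma wo_cases:
  assumes "b \<in> Field r"
  obtains "wo_min r b" | c where "wo_succ r c b" | "wo_limit r b"
  using assms by (auto simp: wo_limit_def)

context
  fixes B :: "'o \<Rightarrow> 'c set"
  assumes beth: "beth_seq r B"
begin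

lemma nat_lepoll_beth_min: "wo_min r a \<Longrightarrow> (UNIV :: nat set) \<lesssim> B a"
  using beth by (simp add: beth_seq_def eqpoll_imp_lepoll eqpoll_sym)

lemma Pow_lepoll_beth_succ: "wo_succ r b a \<Longrightarrow> Pow (B b) \<lesssim> B a"
  using beth by (simp add: beth_seq_def eqpoll_imp_lepoll eqpoll_sym)

lemma beth_lepoll_limit: "wo_limit r a \<Longrightarrow> wo_less r b a \<Longrightarrow> B b \<lesssim> B a"
  using beth by (simp add: beth_seq_def)

lemma Pow_beth_lepoll_if_less: "wo_less r a b \<Longrightarrow> Pow (B a) \<lesssim> B b"
proof (induction b arbitrary: a rule: W.well_order_induct)
  case (1 b)
  then have ab: "(a, b) \<in> r" "a \<noteq> b" and "a \<in> Field r" "b \<in> Field r"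
    by (auto simp: wo_less_def Field_def)
  then consider "wo_min r b" | c where "wo_succ r c b" | "wo_limit r b"
    using wo_cases by blast
  then show ?case
  proof cases
    case 1
    then show ?thesis using ab \<open>a \<in> Field r\<close> antisymD[OF W.ANTISYM] by (auto simp: wo_min_def)
  next
    case (2 c)
    show ?thesis
    proof (cases "a = c")
      case False
      then have "wo_less r a c" using 2 "1.prems" by (rule wo_less_pred_if_succ[rotated -1])
      then have "Pow (B a) \<lesssim> B c" using "1.IH" 2 by (auto simp: wo_succ_def wo_less_def)
      also have "\<dots> \<lesssim> Pow (B c)" by (rule lepoll_Pow_self)
      also have "\<dots> \<lesssim> B b" using 2 by (rule Pow_lepoll_beth_succ)
      finally show ?thesis .
    qed (use 2 Pow_lepoll_beth_succ in simp)
  next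
    case 3
    obtain a' where a': "wo_succ r a a'" "(a', b) \<in> r" using wo_succ_between "1.prems" by blast
    with 3 have "wo_less r a' b" by (auto simp: wo_limit_def wo_less_def)
    have "Pow (B a) \<lesssim> B a'" using a'(1) by (rule Pow_lepoll_beth_succ)
    also have "\<dots> \<lesssim> B b" using 3 \<open>wo_less r a' b\<close> by (rule beth_lepoll_limit)
    finally show ?thesis .
  qed
qed

lemma nat_lepoll_beth: "b \<in> Field r \<Longrightarrow> (UNIV :: nat set) \<lesssim> B b"
proof (induction b rule: W.well_order_induct)
  case (1 b)
  from \<open>b \<in> Field r\<close> consider "wo_min r b" | c where "wo_succ r c b" | "wo_limit r b"
    by (rule wo_cases)
  then show ?case
  proof cases
    case 1
    then show ?thesis by (rule nat_lepoll_beth_min)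
  next
    case (2 c)
    then have "(UNIV :: nat set) \<lesssim> B c" using "1.IH" by (auto simp: wo_succ_def wo_less_def Field_def)
    also have "\<dots> \<lesssim> Pow (B c)" by (rule lepoll_Pow_self)
    also have "\<dots> \<lesssim> B b" using 2 by (rule Pow_lepoll_beth_succ)
    finally show ?thesis .
  next
    case 3
    then obtain c where "c \<in> Field r" "(b, c) \<notin> r" by (auto simp: wo_limit_def wo_min_def)
    then have "wo_less r c b" using W.TOTALS "1.prems" refl_onD[OF W.REFL] by (auto simp: wo_less_def)
    then have "(UNIV :: nat set) \<lesssim> B c" using "1.IH" by (auto simp: wo_less_def Field_def)
    also have "\<dots> \<lesssim> B b" using 3 \<open>wo_less r c b\<close> by (rule beth_lepoll_limit)
    finally show ?thesis .
  qed
qed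

lemma Pow_beth_not_eqpoll_if_less:
  assumes "wo_less r a b"
  shows "\<not> Pow (B a) \<approx> Pow (B b)"
proof
  assume "Pow (B a) \<approx> Pow (B b)"
  then have "Pow (B b) \<lesssim> Pow (B a)" by (simp add: eqpoll_imp_lepoll eqpoll_sym)
  also have "\<dots> \<lesssim> B b" using assms by (rule Pow_beth_lepoll_if_less)
  finally have "B b \<approx> Pow (B b)" by (rule lepoll_antisym[OF lepoll_Pow_self])
  then show False using lesspoll_Pow_self[of "B b"] by (simp add: lesspoll_def)
qed

end

end

theorem carrier_archipelago_eqpoll:
  assumes "group_sequence G" and "\<And>n. carrier (G n) \<approx> carrier (G 0)"
  shows "carrier (archipelago G) \<approx> (UNIV :: nat set) \<rightarrow>\<^sub>E carrier (G 0)"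
proof -
  obtain d where d: "\<And>n. bij_betw (d n) (carrier (G n)) (carrier (G 0))"
    using assms(2) unfolding eqpoll_def by metis
  then have "bij_betw (the_inv_into (carrier (G n)) (d n)) (carrier (G 0)) (carrier (G n))" for n
    by (rule bij_betw_the_inv_into)
  then have "(UNIV :: nat set) \<rightarrow>\<^sub>E carrier (G 0) \<lesssim> carrier (archipelago G)"
    by (rule group_sequence.lepoll_carrier_archipelago[OF assms(1)])
  with group_sequence.carrier_archipelago_lepoll[OF assms(1) d] show ?thesis
    by (rule lepoll_antisym)
qed

definition symdiff_group :: "'b set monoid" where
  "symdiff_group = \<lparr>carrier = UNIV, Group.monoid.mult = (\<lambda>A B. (A - B) \<union> (B - A)), one = {}\<rparr>"

lemma group_symdiff_group: "group symdiff_group"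
proof (rule groupI)
  show "\<exists>y\<in>carrier symdiff_group. y \<otimes>\<^bsub>symdiff_group\<^esub> x = \<one>\<^bsub>symdiff_group\<^esub>" for x
    by (rule bexI[of _ x]) (auto simp: symdiff_group_def)
qed (auto simp: symdiff_group_def)

theorem archipelago_symdiff_not_iso:
  fixes K :: "'b monoid"
  shows "\<not> archipelago (\<lambda>_. symdiff_group :: 'b set monoid) \<cong> K"
proof
  let ?A = "archipelago (\<lambda>_. symdiff_group :: 'b set monoid)"
  assume "?A \<cong> K"
  then have "carrier ?A \<lesssim> (UNIV :: 'b set)"
    by (auto simp: is_iso_def iso_def lepoll_def bij_betw_def)
  moreover have "Pow (UNIV :: 'b set) \<lesssim> (UNIV :: nat set) \<rightarrow>\<^sub>E carrier (symdiff_group :: 'b set monoid)"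
    unfolding lepoll_def by (intro exI[of _ "\<lambda>S _. S"]) (auto simp: inj_on_def symdiff_group_def fun_eq_iff)
  moreover have "(UNIV :: nat set) \<rightarrow>\<^sub>E carrier (symdiff_group :: 'b set monoid) \<lesssim> carrier ?A"
    by (rule group_sequence.lepoll_carrier_archipelago[of _ "\<lambda>_. id"])
      (simp_all add: group_sequence_def group_symdiff_group)
  ultimately have "Pow (UNIV :: 'b set) \<lesssim> (UNIV :: 'b set)"
    by (meson lepoll_trans)
  then show False
    using lesspoll_Pow_self[of "UNIV :: 'b set"] by (meson lepoll_antisym lesspoll_def)
qed

lemma card_archipelago_free_group:
  assumes "(UNIV :: nat set) \<lesssim> D"
  shows "carrier (archipelago (\<lambda>_. free_group (Pow D))) \<approx> Pow D"
proof -
  have "carrier (archipelago (\<lambda>_. free_group (Pow D))) \<approx>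
      (UNIV :: nat set) \<rightarrow>\<^sub>E carrier (free_group (Pow D))"
    by (rule carrier_archipelago_eqpoll) (simp_all add: group_sequence_def group_free_group)
  also have "\<dots> \<approx> Pow D"
    using free_group_sequences_lepoll_Pow[OF assms] Pow_lepoll_free_group_sequences
    by (rule lepoll_antisym)
  finally show ?thesis .
qed

theorem archipelago_free_group_beth_not_iso:
  assumes WO: "Well_order r" and beth: "beth_seq r B"
    and a: "a \<in> Field r" and b: "b \<in> Field r" and "a \<noteq> b"
  shows "\<not> archipelago (\<lambda>_. free_group (Pow (B a))) \<cong> archipelago (\<lambda>_. free_group (Pow (B b)))"
proof
  assume "archipelago (\<lambda>_. free_group (Pow (B a))) \<cong> archipelago (\<lambda>_. free_group (Pow (B b)))"
  then have "carrier (archipelago (\<lambda>_. free_group (Pow (B a)))) \<approx>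
      carrier (archipelago (\<lambda>_. free_group (Pow (B b))))"
    by (auto simp: is_iso_def iso_def eqpoll_def)
  then have "Pow (B a) \<approx> Pow (B b)"
    using card_archipelago_free_group[OF nat_lepoll_beth[OF WO beth a]]
      card_archipelago_free_group[OF nat_lepoll_beth[OF WO beth b]]
    by (meson eqpoll_sym eqpoll_trans)
  moreover have "wo_less r a b \<or> wo_less r b a"
    using wo_rel.TOTALS[of r] WO a b \<open>a \<noteq> b\<close> by (auto simp: wo_rel_def wo_less_def)
  ultimately show False
    using Pow_beth_not_eqpoll_if_less[OF WO beth] eqpoll_sym by blast
qed

theorem theorem9:
  shows "(\<forall>G :: nat \<Rightarrow> 'a monoid.
            (\<forall>n. group (G n)) \<and> (\<forall>n. carrier (G n) \<approx> carrier (G 0)) \<longrightarrow>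
            carrier (archipelago G) \<approx> (UNIV :: nat set) \<rightarrow>\<^sub>E carrier (G 0))
       \<and> (\<forall>K :: 'i \<Rightarrow> 'b monoid. \<exists>G :: nat \<Rightarrow> 'b set monoid.
            (\<forall>n. group (G n)) \<and> (\<forall>i. \<not> archipelago G \<cong> K i))
       \<and> (\<forall>(r :: 'o rel) (B :: 'o \<Rightarrow> 'c set). Well_order r \<and> beth_seq r B \<longrightarrow>
            (\<forall>a \<in> Field r. \<forall>b \<in> Field r. a \<noteq> b \<longrightarrow>
               \<not> archipelago (\<lambda>_. free_group (Pow (B a))) \<cong> archipelago (\<lambda>_. free_group (Pow (B b)))))"
proof (intro conjI allI impI ballI)
  show "carrier (archipelago G) \<approx> (UNIV :: nat set) \<rightarrow>\<^sub>E carrier (G 0)"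
    if "(\<forall>n. group (G n)) \<and> (\<forall>n. carrier (G n) \<approx> carrier (G 0))" for G :: "nat \<Rightarrow> 'a monoid"
    using that by (intro carrier_archipelago_eqpoll) (simp_all add: group_sequence_def)
  show "\<exists>G :: nat \<Rightarrow> 'b set monoid. (\<forall>n. group (G n)) \<and> (\<forall>i. \<not> archipelago G \<cong> K i)"
    for K :: "'i \<Rightarrow> 'b monoid"
    by (intro exI[of _ "\<lambda>_. symdiff_group"] conjI allI group_symdiff_group archipelago_symdiff_not_iso)
  show "\<not> archipelago (\<lambda>_. free_group (Pow (B a))) \<cong> archipelago (\<lambda>_. free_group (Pow (B b)))"
    if "Well_order r \<and> beth_seq r B" "a \<in> Field r" "b \<in> Field r" "a \<noteq> b"
    for r :: "'o rel" and B :: "'o \<Rightarrow> 'c set" and a b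
    by (rule archipelago_free_group_beth_not_iso) (use that in auto)
qed

end
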